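(* Let $m,n$ be integers, $w_k=(ab^{-1})^m ab(a^{-1}b)^m$ and $r=w_k^n(ab^{-1})^m$ in the free group $F_{a,b}$. For a word $u\in F_{a,b}$ let $P_u\in\mathbb C[x,y,z]$ be the unique polynomial with $\operatorname{tr}\rho(u)=P_u(\operatorname{tr}\rho(a),\operatorname{tr}\rho(b),\operatorname{tr}\rho(ab^{-1}))$ for all $\rho:F_{a,b}\to\mathrm{SL}_2(\mathbb C)$, and let $\varphi=P_{rab}-P_{\overleftarrow{r}ab}$. Then \[\varphi(x,y,z)=\big(xyz+4-x^2-y^2-z^2\big)\big(S_n(t)S_{m-1}(z)-S_{n-1}(t)S_m(z)\big),\] where $t=\left( xS_m(z)-yS_{m-1}(z) \right)\left( yS_m(z)-xS_{m-1}(z) \right)-z\left(S^2_m(z)+S^2_{m-1}(z)\right)+4S_m(z)S_{m-1}(z)$.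
   Context: $\overleftarrow{u}$ denotes the word $u$ with its letters written in reversed order. The Chebyshev polynomials $S_j(\omega)$ are defined for all integers $j$ by $S_0=1$, $S_1=\omega$, $S_{j+1}=\omega S_j-S_{j-1}$. (The polynomial $\varphi$ cuts out the $\mathrm{SL}_2(\mathbb C)$ character variety of the double twist link $J(2m+1,2n+1)$ in $\mathbb C^3(x,y,z)$.) *)

theory Defs
  imports "HOL-Analysis.Analysis"
begin

datatype letter = La | Lai | Lb | Lbi

fun letter_inv :: "letter \<Rightarrow> letter" where
  "letter_inv La = Lai" | "letter_inv Lai = La" | "letter_inv Lb = Lbi" | "letter_inv Lbi = Lb"

definition word_inv :: "letter list \<Rightarrow> letter list" where
  "word_inv u = rev (map letter_inv u)"

definition word_pow :: "letter list \<Rightarrow> int \<Rightarrow> letter list" where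
  "word_pow u k = (if 0 \<le> k then concat (replicate (nat k) u)
                   else concat (replicate (nat (- k)) (word_inv u)))"

definition word_rev :: "letter list \<Rightarrow> letter list" where
  "word_rev u = rev u"

definition w_word :: "int \<Rightarrow> letter list" where
  "w_word m = word_pow [La, Lbi] m @ [La, Lb] @ word_pow [Lai, Lb] m"

definition r_word :: "int \<Rightarrow> int \<Rightarrow> letter list" where
  "r_word m n = word_pow (w_word m) n @ word_pow [La, Lbi] m"

fun eval_letter :: "complex^2^2 \<Rightarrow> complex^2^2 \<Rightarrow> letter \<Rightarrow> complex^2^2" where
  "eval_letter A B La = A"
| "eval_letter A B Lai = matrix_inv A"
| "eval_letter A B Lb = B"
| "eval_letter A B Lbi = matrix_inv B"

definition eval_word :: "complex^2^2 \<Rightarrow> complex^2^2 \<Rightarrow> letter list \<Rightarrow> complex^2^2" where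
  "eval_word A B u = foldr (\<lambda>l M. eval_letter A B l ** M) u (mat 1)"

definition trace_poly :: "letter list \<Rightarrow> complex \<Rightarrow> complex \<Rightarrow> complex \<Rightarrow> complex" where
  "trace_poly u = (THE P. \<forall>A B :: complex^2^2. det A = 1 \<longrightarrow> det B = 1 \<longrightarrow>
       trace (eval_word A B u) = P (trace A) (trace B) (trace (A ** matrix_inv B)))"

text \<open>Chebyshev polynomials S_j for all integers j: S_0 = 1, S_1 = w,
  S_{j+1} = w S_j - S_{j-1}.  U n = S_{n-1} for n \<ge> 0, and S_{-j} = - S_{j-2}.\<close>
fun cheb_U :: "nat \<Rightarrow> complex \<Rightarrow> complex" where
  "cheb_U 0 w = 0"
| "cheb_U (Suc 0) w = 1"
| "cheb_U (Suc (Suc k)) w = w * cheb_U (Suc k) w - cheb_U k w"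

definition cheb_S :: "int \<Rightarrow> complex \<Rightarrow> complex" where
  "cheb_S j w = (if -1 \<le> j then cheb_U (nat (j + 1)) w else - cheb_U (nat (- j - 1)) w)"

end

theory Submission
  imports Defs
begin

(* The trace of any word in A, B in SL_2(C) is a polynomial in tr A, tr B and tr AB (Fricke), and
   every triple (x, y, z) is the triple (tr A, tr B, tr AB^-1) of a pair A = [[x,1],[-1,0]],
   B = [[a,0],[c,1/a]]; so P_u is well defined and may be computed on such pairs.  Transposition
   reads words backwards without changing the trace triple, whence
   phi = tr(rho(r) AB) - tr(rho(r) BA).  By Cayley-Hamilton, M^k = S_{k-1}(tr M) M - S_{k-2}(tr M) I
   for M in SL_2, which expresses rho(r) = W^n X^m (W = rho(w), X = rho(ab^-1)) through S_{n-1}(T),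
   S_{n-2}(T) with T = tr W, and through S_m(z), S_{m-1}(z); what is left are polynomial identities
   modulo S_m(z)^2 - z S_m(z) S_{m-1}(z) + S_{m-1}(z)^2 = 1. *)

section \<open>Two-by-two matrices\<close>

definition mat2 :: "'a \<Rightarrow> 'a \<Rightarrow> 'a \<Rightarrow> 'a \<Rightarrow> 'a^2^2" where
  "mat2 a b c d = (\<chi> i j. if i = 1 then (if j = 1 then a else b) else (if j = 1 then c else d))"

lemma mat2_nth [simp]:
  "mat2 a b c d $1$1 = a" "mat2 a b c d $1$2 = b" "mat2 a b c d $2$1 = c" "mat2 a b c d $2$2 = d"
  by (simp_all add: mat2_def)

lemma mat2_cases:
  fixes M :: "'a^2^2"
  obtains a b c d where "M = mat2 a b c d"
proof
  show "M = mat2 (M$1$1) (M$1$2) (M$2$1) (M$2$2)"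
    by (simp add: vec_eq_iff forall_2)
qed

lemma mat2_eq_iff: "mat2 a b c d = mat2 a' b' c' d' \<longleftrightarrow> a = a' \<and> b = b' \<and> c = c' \<and> d = d'"
  by (metis mat2_nth)

lemma mat_eq_mat2: "mat k = mat2 k 0 0 k"
  by (simp add: vec_eq_iff forall_2 mat_def)

lemma mat2_add [simp]: "mat2 a b c d + mat2 e f g h = mat2 (a + e) (b + f) (c + g) (d + h)"
  by (simp add: vec_eq_iff forall_2)

lemma mat2_mult [simp]:
  fixes a b c d :: "'a::comm_semiring_1"
  shows "mat2 a b c d ** mat2 e f g h = mat2 (a*e + b*g) (a*f + b*h) (c*e + d*g) (c*f + d*h)"
  by (simp add: vec_eq_iff forall_2 matrix_matrix_mult_def sum_2)

lemma trace_mat2 [simp]: "trace (mat2 a b c d) = a + d"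
  by (simp add: trace_def sum_2)

lemma det_mat2 [simp]: "det (mat2 a b c d) = a * d - b * c"
  by (simp add: det_2)

lemma trace_transpose: "trace (transpose A) = trace A"
  by (simp add: trace_def transpose_def)

lemma matrix_mul_matrix_inv:
  assumes "invertible A"
  shows "A ** matrix_inv A = mat 1" and "matrix_inv A ** A = mat 1"
  using someI_ex[OF assms[unfolded invertible_def]] by (simp_all add: matrix_inv_def)

lemma matrix_inv_eqI:
  fixes A B :: "'a::field^'n^'n"
  assumes "A ** B = mat 1"
  shows "matrix_inv A = B"
proof -
  have inv: "invertible A"
    using assms invertible_right_inverse by blast
  have "matrix_inv A = matrix_inv A ** (A ** B)"
    by (simp add: assms)
  also have "\<dots> = B"
    by (simp add: matrix_mul_assoc matrix_mul_matrix_inv(2)[OF inv])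
  finally show ?thesis .
qed

lemma matrix_inv_mat2:
  fixes a b c d :: "'a::field"
  assumes "a * d - b * c = 1"
  shows "matrix_inv (mat2 a b c d) = mat2 d (-b) (-c) a"
  by (rule matrix_inv_eqI) (use assms in \<open>simp add: mat_eq_mat2 mat2_eq_iff algebra_simps\<close>)

lemma det_matrix_inv_eq_1:
  fixes A :: "'a::field^'n^'n"
  assumes "det A = 1"
  shows "det (matrix_inv A) = 1"
proof -
  have "invertible A"
    using assms invertible_det_nz by force
  then have "det A * det (matrix_inv A) = 1"
    by (metis det_I det_mul matrix_mul_matrix_inv(1))
  with assms show ?thesis
    by simp
qed

lemma transpose_matrix_inv:
  fixes A :: "'a::field^'n^'n"
  assumes "invertible A"
  shows "matrix_inv (transpose A) = transpose (matrix_inv A)"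
  by (rule matrix_inv_eqI) (simp add: matrix_transpose_mul[symmetric] matrix_mul_matrix_inv(2)[OF assms])

lemma trace_mult_matrix_inv:
  fixes A B :: "'a::field^2^2"
  assumes "det B = 1"
  shows "trace (A ** matrix_inv B) = trace A * trace B - trace (A ** B)"
proof -
  obtain a1 a2 a3 a4 where A: "A = mat2 a1 a2 a3 a4" by (rule mat2_cases)
  obtain b1 b2 b3 b4 where B: "B = mat2 b1 b2 b3 b4" by (rule mat2_cases)
  have "b1 * b4 - b2 * b3 = 1"
    using assms B by simp
  then show ?thesis
    unfolding A B by (simp add: matrix_inv_mat2 algebra_simps)
qed

lemma eval_word_Nil [simp]: "eval_word A B [] = mat 1"
  by (simp add: eval_word_def)

lemma eval_word_Cons [simp]: "eval_word A B (l # u) = eval_letter A B l ** eval_word A B u"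
  by (simp add: eval_word_def)

lemma eval_word_append [simp]: "eval_word A B (u @ v) = eval_word A B u ** eval_word A B v"
  by (induction u) (simp_all add: matrix_mul_assoc)

lemma det_eval_word:
  assumes "det A = 1" "det B = 1"
  shows "det (eval_word A B u) = 1"
proof (induction u)
  case (Cons l u)
  have "det (eval_letter A B l) = 1"
    using assms by (cases l) (simp_all add: det_matrix_inv_eq_1)
  with Cons show ?case
    by (simp add: det_mul)
qed simp

lemma eval_letter_mult_letter_inv:
  assumes "det A = 1" "det B = 1"
  shows "eval_letter A B l ** eval_letter A B (letter_inv l) = mat 1"
proof -
  have "invertible A" "invertible B"
    using assms invertible_det_nz by force+
  then show ?thesis
    by (cases l) (simp_all add: matrix_mul_matrix_inv)
qed

lemma eval_word_word_inv:
  assumes "det A = 1" "det B = 1"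
  shows "eval_word A B (word_inv u) = matrix_inv (eval_word A B u)"
proof -
  have "eval_word A B u ** eval_word A B (word_inv u) = mat 1"
  proof (induction u)
    case (Cons l u)
    have "word_inv (l # u) = word_inv u @ [letter_inv l]"
      by (simp add: word_inv_def)
    then have "eval_word A B (l # u) ** eval_word A B (word_inv (l # u)) =
        eval_letter A B l ** (eval_word A B u ** eval_word A B (word_inv u)) ** eval_letter A B (letter_inv l)"
      by (simp add: matrix_mul_assoc)
    with Cons show ?case
      by (simp add: eval_letter_mult_letter_inv[OF assms])
  qed (simp add: word_inv_def)
  then show ?thesis
    by (rule matrix_inv_eqI[symmetric])
qed

lemma eval_word_transpose:
  assumes "det A = 1" "det B = 1"
  shows "eval_word (transpose A) (transpose B) u = transpose (eval_word A B (rev u))"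
proof (induction u)
  case (Cons l u)
  have "invertible A" "invertible B"
    using assms invertible_det_nz by force+
  then have "eval_letter (transpose A) (transpose B) l = transpose (eval_letter A B l)"
    by (cases l) (simp_all add: transpose_matrix_inv)
  with Cons show ?case
    by (simp add: matrix_transpose_mul)
qed simp

section \<open>Chebyshev polynomials\<close>

lemma cheb_S_of_nat: "cheb_S (int k - 1) w = cheb_U k w"
  by (simp add: cheb_S_def)

lemma cheb_S_of_neg_nat: "cheb_S (- int k - 1) w = - cheb_U k w"
proof (cases k)
  case (Suc i)
  then have "nat (- (- int k - 1) - 1) = k"
    by simp
  with Suc show ?thesis
    by (simp add: cheb_S_def)
qed (simp add: cheb_S_def)

lemma cheb_S_rec: "cheb_S (j + 1) w = w * cheb_S j w - cheb_S (j - 1) w"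
proof (cases "0 \<le> j")
  case True
  then obtain k where "j = int k"
    using nonneg_int_cases by blast
  then have "j + 1 = int (Suc (Suc k)) - 1" "j = int (Suc k) - 1" "j - 1 = int k - 1"
    by simp_all
  then show ?thesis
    by (simp only: cheb_S_of_nat cheb_U.simps)
next
  case False
  then obtain k where k: "j = - int k - 1"
    by (intro that[of "nat (- j - 1)"]) simp
  show ?thesis
  proof (cases k)
    case 0
    with k show ?thesis
      by (simp add: cheb_S_def)
  next
    case (Suc i)
    with k have "j + 1 = - int i - 1" "j = - int (Suc i) - 1" "j - 1 = - int (Suc (Suc i)) - 1"
      by simp_all
    then show ?thesis
      by (simp only: cheb_S_of_neg_nat cheb_U.simps) simp
  qed
qed

lemma cheb_S_reflect: "cheb_S (- j) w = - cheb_S (j - 2) w"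
proof (cases "1 \<le> j")
  case True
  then have "- j = - int (nat (j - 1)) - 1" "j - 2 = int (nat (j - 1)) - 1"
    by simp_all
  then show ?thesis
    by (simp only: cheb_S_of_nat cheb_S_of_neg_nat)
next
  case False
  then have "- j = int (nat (1 - j)) - 1" "j - 2 = - int (nat (1 - j)) - 1"
    by simp_all
  then show ?thesis
    by (simp only: cheb_S_of_nat cheb_S_of_neg_nat) simp
qed

lemma cheb_S_cassini: "(cheb_S j w)\<^sup>2 - w * cheb_S j w * cheb_S (j - 1) w + (cheb_S (j - 1) w)\<^sup>2 = 1"
proof (induction j rule: int_induct[where k = 0])
  case base
  then show ?case
    by (simp add: cheb_S_def)
next
  case (step1 i)
  then show ?case
    unfolding add_diff_cancel_right' cheb_S_rec by (simp add: power2_eq_square algebra_simps)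
next
  case (step2 i)
  moreover have "cheb_S i w = w * cheb_S (i - 1) w - cheb_S (i - 1 - 1) w"
    using cheb_S_rec[of "i - 1" w] by simp
  ultimately show ?case
    by (simp add: power2_eq_square algebra_simps)
qed

text \<open>Cayley--Hamilton for \<open>M = mat2 a b c d\<close> of determinant 1, written as
  \<open>M (pM - qI) = (p tr M - q) M - pI\<close>.\<close>
lemma mat2_mult_cayley_hamilton:
  fixes a b c d :: "'a::idom"
  assumes "a * d - b * c = 1"
  shows "mat2 a b c d ** mat2 (p*a - q) (p*b) (p*c) (p*d - q) =
    mat2 (((a+d)*p - q)*a - p) (((a+d)*p - q)*b) (((a+d)*p - q)*c) (((a+d)*p - q)*d - p)"
  unfolding mat2_mult mat2_eq_iff using assms
  by (intro conjI) (algebra | simp add: algebra_simps)+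

lemma eval_word_replicate:
  assumes "eval_word A B u = mat2 a b c d" "a * d - b * c = 1"
  shows "eval_word A B (concat (replicate k u)) =
    mat2 (cheb_S (int k - 1) (a + d) * a - cheb_S (int k - 2) (a + d)) (cheb_S (int k - 1) (a + d) * b)
      (cheb_S (int k - 1) (a + d) * c) (cheb_S (int k - 1) (a + d) * d - cheb_S (int k - 2) (a + d))"
proof (induction k)
  case 0
  then show ?case
    by (simp add: cheb_S_def mat_eq_mat2)
next
  case (Suc k)
  have "cheb_S (int k) (a + d) = (a + d) * cheb_S (int k - 1) (a + d) - cheb_S (int k - 2) (a + d)"
    using cheb_S_rec[of "int k - 1" "a + d"] by simp
  moreover have "int (Suc k) - 1 = int k" "int (Suc k) - 2 = int k - 1"
    by simp_all
  ultimately show ?case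
    using Suc assms mat2_mult_cayley_hamilton[OF assms(2)] by simp
qed

lemma eval_word_pow:
  assumes "det A = 1" "det B = 1" "eval_word A B u = mat2 a b c d" "a * d - b * c = 1"
  shows "eval_word A B (word_pow u k) =
    mat2 (cheb_S (k - 1) (a + d) * a - cheb_S (k - 2) (a + d)) (cheb_S (k - 1) (a + d) * b)
      (cheb_S (k - 1) (a + d) * c) (cheb_S (k - 1) (a + d) * d - cheb_S (k - 2) (a + d))"
proof (cases "0 \<le> k")
  case True
  then show ?thesis
    using eval_word_replicate[OF assms(3,4), of "nat k"] by (simp add: word_pow_def)
next
  case False
  define j where "j = nat (- k)"
  have "k - 1 = - (int j + 1)" "k - 2 = - (int j + 2)"
    using False j_def by simp_all
  then have S: "cheb_S (k - 1) w = - cheb_S (int j - 1) w" "cheb_S (k - 2) w = - cheb_S (int j) w" for w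
    by (simp_all only: cheb_S_reflect) simp_all
  have "eval_word A B (word_inv u) = mat2 d (- b) (- c) a"
    using assms by (simp add: eval_word_word_inv matrix_inv_mat2)
  moreover have "d * a - (- b) * (- c) = 1"
    using assms(4) by (simp add: algebra_simps)
  moreover have "cheb_S (int j) (a + d) = (a + d) * cheb_S (int j - 1) (a + d) - cheb_S (int j - 2) (a + d)"
    using cheb_S_rec[of "int j - 1" "a + d"] by simp
  ultimately show ?thesis
    using False eval_word_replicate[of A B "word_inv u" d "- b" "- c" a j]
    by (simp add: word_pow_def j_def[symmetric] S mat2_eq_iff algebra_simps)
qed

lemma trace_eval_word_pow_mult:
  fixes u :: "letter list"
  assumes "det A = 1" "det B = 1"
  defines "W \<equiv> eval_word A B u"
  shows "trace (eval_word A B (word_pow u k) ** N) =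
    cheb_S (k - 1) (trace W) * trace (W ** N) - cheb_S (k - 2) (trace W) * trace N"
proof -
  obtain a b c d where W: "W = mat2 a b c d" by (rule mat2_cases)
  obtain e f g h where N: "N = mat2 e f g h" by (rule mat2_cases)
  have "a * d - b * c = 1"
    using det_eval_word[OF assms(1,2), of u] W by (simp add: W_def)
  with assms W show ?thesis
    by (simp add: eval_word_pow N W_def algebra_simps)
qed

section \<open>Trace polynomials\<close>

text \<open>Fricke: \<open>I, A, B, AB\<close> span a space that is stable under left multiplication by
  \<open>A\<^sup>\<plusminus>\<^sup>1\<close> and \<open>B\<^sup>\<plusminus>\<^sup>1\<close>, and the coordinates change by rules that only involve
  \<open>x = tr A\<close>, \<open>y = tr B\<close> and \<open>w = tr AB\<close>.\<close>
fun fricke_step :: "complex \<Rightarrow> complex \<Rightarrow> complex \<Rightarrow> letter \<Rightarrow>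
    complex \<times> complex \<times> complex \<times> complex \<Rightarrow> complex \<times> complex \<times> complex \<times> complex" where
  "fricke_step x y w La (c0, c1, c2, c3) = (- c1, c0 + x*c1, - c3, c2 + x*c3)"
| "fricke_step x y w Lai (c0, c1, c2, c3) = (x*c0 + c1, - c0, x*c2 + c3, - c2)"
| "fricke_step x y w Lb (c0, c1, c2, c3) =
    (c1*(w - x*y) - c2 - x*c3, y*c1 + c3, c0 + x*c1 + y*c2 + w*c3, - c1)"
| "fricke_step x y w Lbi (c0, c1, c2, c3) =
    (y*c0 - (w - x*y)*c1 + c2 + x*c3, - c3, - c0 - x*c1 - w*c3, c1 + y*c3)"

definition fricke_coords ::
    "letter list \<Rightarrow> complex \<Rightarrow> complex \<Rightarrow> complex \<Rightarrow> complex \<times> complex \<times> complex \<times> complex" where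
  "fricke_coords u x y w = foldr (fricke_step x y w) u (1, 0, 0, 0)"

fun fricke_comb :: "complex^2^2 \<Rightarrow> complex^2^2 \<Rightarrow> complex \<times> complex \<times> complex \<times> complex \<Rightarrow> complex^2^2" where
  "fricke_comb A B (c0, c1, c2, c3) = mat c0 + mat c1 ** A + mat c2 ** B + mat c3 ** (A ** B)"

definition fricke_trace :: "letter list \<Rightarrow> complex \<Rightarrow> complex \<Rightarrow> complex \<Rightarrow> complex" where
  "fricke_trace u x y w = (case fricke_coords u x y w of (c0, c1, c2, c3) \<Rightarrow> 2*c0 + x*c1 + y*c2 + w*c3)"

lemma eval_letter_mult_fricke_comb:
  assumes "det A = 1" "det B = 1"
  shows "eval_letter A B l ** fricke_comb A B c
    = fricke_comb A B (fricke_step (trace A) (trace B) (trace (A ** B)) l c)"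
proof -
  obtain a1 a2 a3 a4 where A: "A = mat2 a1 a2 a3 a4" by (rule mat2_cases)
  obtain b1 b2 b3 b4 where B: "B = mat2 b1 b2 b3 b4" by (rule mat2_cases)
  obtain c0 c1 c2 c3 where c: "c = (c0, c1, c2, c3)" by (rule prod_cases4)
  have "a1*a4 - a2*a3 = 1" "b1*b4 - b2*b3 = 1"
    using assms by (simp_all add: A B)
  then show ?thesis
    by (induct l; simp add: A B c matrix_inv_mat2 mat_eq_mat2 mat2_eq_iff; (intro conjI)?; algebra)
qed

lemma eval_word_eq_fricke_comb:
  assumes "det A = 1" "det B = 1"
  shows "eval_word A B u = fricke_comb A B (fricke_coords u (trace A) (trace B) (trace (A ** B)))"
proof (induction u)
  case Nil
  have "mat 0 ** M = 0" for M :: "complex^2^2"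
    by (simp add: vec_eq_iff matrix_matrix_mult_def mat_def)
  then show ?case
    by (simp add: fricke_coords_def)
next
  case (Cons l u)
  then show ?case
    by (simp add: fricke_coords_def eval_letter_mult_fricke_comb[OF assms])
qed

lemma trace_eval_word_eq_fricke_trace:
  assumes "det A = 1" "det B = 1"
  shows "trace (eval_word A B u) = fricke_trace u (trace A) (trace B) (trace (A ** B))"
proof -
  obtain a1 a2 a3 a4 where A: "A = mat2 a1 a2 a3 a4" by (rule mat2_cases)
  obtain b1 b2 b3 b4 where B: "B = mat2 b1 b2 b3 b4" by (rule mat2_cases)
  obtain c0 c1 c2 c3 where c: "fricke_coords u (trace A) (trace B) (trace (A ** B)) = (c0, c1, c2, c3)"
    by (rule prod_cases4)
  show ?thesis
    unfolding eval_word_eq_fricke_comb[OF assms] using c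
    by (simp add: fricke_trace_def A B mat_eq_mat2 algebra_simps)
qed

lemma sl2_normal_form:
  fixes x y z :: complex
  obtains a c d where "a * d = 1" "a + d = y" "x * d - c = z"
proof -
  define a where "a = (y + csqrt (y\<^sup>2 - 4)) / 2"
  have "(csqrt (y\<^sup>2 - 4))\<^sup>2 = y\<^sup>2 - 4"
    by simp
  then have "a * (y - a) = 1"
    unfolding a_def by (simp add: field_simps power2_eq_square)
  then show ?thesis
    by (intro that[of a "y - a" "x * (y - a) - z"]) simp_all
qed

lemma sl2_normal_form_traces:
  fixes x a c d :: complex
  assumes "a * d = 1"
  shows "det (mat2 x 1 (-1) 0) = 1" "det (mat2 a 0 c d) = 1"
    and "trace (mat2 x 1 (-1) 0 ** matrix_inv (mat2 a 0 c d)) = x * d - c"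
  using assms matrix_inv_mat2[of a d 0 c] by simp_all

lemma trace_poly_eval_word:
  assumes "det A = 1" "det B = 1"
  shows "trace_poly u (trace A) (trace B) (trace (A ** matrix_inv B)) = trace (eval_word A B u)"
proof -
  define F where "F = (\<lambda>x y z. fricke_trace u x y (x * y - z))"
  have F: "\<forall>A B :: complex^2^2. det A = 1 \<longrightarrow> det B = 1 \<longrightarrow>
      trace (eval_word A B u) = F (trace A) (trace B) (trace (A ** matrix_inv B))"
    by (simp add: F_def trace_eval_word_eq_fricke_trace trace_mult_matrix_inv)
  have "trace_poly u = F"
    unfolding trace_poly_def
  proof (rule the_equality)
    fix P
    assume P: "\<forall>A B :: complex^2^2. det A = 1 \<longrightarrow> det B = 1 \<longrightarrow>
      trace (eval_word A B u) = P (trace A) (trace B) (trace (A ** matrix_inv B))"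
    show "P = F"
    proof (intro ext)
      fix x y z :: complex
      obtain a c d where "a * d = 1" "a + d = y" "x * d - c = z"
        by (rule sl2_normal_form)
      then show "P x y z = F x y z"
        using P[rule_format, of "mat2 x 1 (-1) 0" "mat2 a 0 c d"]
          F[rule_format, of "mat2 x 1 (-1) 0" "mat2 a 0 c d"]
          sl2_normal_form_traces[OF \<open>a * d = 1\<close>]
        by simp
    qed
  qed (fact F)
  with F assms show ?thesis
    by simp
qed

lemma trace_poly_append_ab_minus_rev:
  assumes "det A = 1" "det B = 1"
  shows "trace_poly (u @ [La, Lb]) (trace A) (trace B) (trace (A ** matrix_inv B))
       - trace_poly (word_rev u @ [La, Lb]) (trace A) (trace B) (trace (A ** matrix_inv B))
     = trace (eval_word A B u ** (A ** B)) - trace (eval_word A B u ** (B ** A))"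
proof -
  have det: "det (transpose A) = 1" "det (transpose B) = 1"
    using assms by simp_all
  have "trace (transpose A ** matrix_inv (transpose B)) = trace (A ** matrix_inv B)"
    using assms by (simp add: trace_mult_matrix_inv trace_transpose trace_mul_sym[of A B]
        flip: matrix_transpose_mul)
  then have "trace_poly (word_rev u @ [La, Lb]) (trace A) (trace B) (trace (A ** matrix_inv B))
      = trace (eval_word (transpose A) (transpose B) (word_rev u @ [La, Lb]))"
    using trace_poly_eval_word[OF det] by (simp add: trace_transpose)
  also have "\<dots> = trace (B ** A ** eval_word A B u)"
    unfolding eval_word_transpose[OF assms] by (simp add: word_rev_def trace_transpose matrix_mul_assoc)
  also have "\<dots> = trace (eval_word A B u ** (B ** A))"
    by (rule trace_mul_sym)
  finally show ?thesis
    using trace_poly_eval_word[OF assms] by (simp add: matrix_mul_assoc)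
qed

section \<open>The double twist words\<close>

lemma eval_word_pow_normal_form:
  fixes x a c d z :: complex and m :: int
  assumes ad: "a * d = 1" and z: "x * d - c = z"
  defines "A \<equiv> mat2 x 1 (-1) 0" and "B \<equiv> mat2 a 0 c d"
    and "s \<equiv> cheb_S m z" and "t \<equiv> cheb_S (m - 1) z"
  shows "eval_word A B (word_pow [La, Lbi] m) = mat2 s (t * a) (- t * d) (s - (x * d - c) * t)"
    and "eval_word A B (word_pow [Lai, Lb] m) = mat2 (s - t * x * d) (- t * d) (t * (a + x * c)) (s + t * c)"
proof -
  have cheb_m_2: "cheb_S (m - 2) z = z * t - s"
    using cheb_S_rec[of "m - 1" z] by (simp add: s_def t_def)
  have dets: "det A = 1" "det B = 1"
    using ad by (simp_all add: A_def B_def)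
  have inv: "matrix_inv A = mat2 0 (-1) 1 x" "matrix_inv B = mat2 d 0 (-c) a"
    using ad by (simp_all add: A_def B_def matrix_inv_mat2)
  have "eval_word A B [La, Lbi] = mat2 z a (- d) 0"
    by (simp add: inv A_def mat_eq_mat2 z)
  then have "eval_word A B (word_pow [La, Lbi] m)
      = mat2 (t * z - (z * t - s)) (t * a) (t * (- d)) (t * 0 - (z * t - s))"
    using eval_word_pow[OF dets] ad by (simp add: cheb_m_2 t_def)
  then show "eval_word A B (word_pow [La, Lbi] m) = mat2 s (t * a) (- t * d) (s - (x * d - c) * t)"
    by (simp add: mat2_eq_iff algebra_simps flip: z)
  have "eval_word A B [Lai, Lb] = mat2 (- c) (- d) (a + x * c) (x * d)"
    by (simp add: inv B_def mat_eq_mat2)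
  moreover have "- c * (x * d) - (- d) * (a + x * c) = 1"
    using ad by (simp add: algebra_simps)
  moreover have "- c + x * d = z"
    using z by simp
  ultimately have "eval_word A B (word_pow [Lai, Lb] m)
      = mat2 (t * (- c) - (z * t - s)) (t * (- d)) (t * (a + x * c)) (t * (x * d) - (z * t - s))"
    using eval_word_pow[OF dets] by (simp add: cheb_m_2 t_def)
  then show "eval_word A B (word_pow [Lai, Lb] m) = mat2 (s - t * x * d) (- t * d) (t * (a + x * c)) (s + t * c)"
    by (simp add: mat2_eq_iff algebra_simps flip: z)
qed

lemma trace_w_normal_form:
  fixes x a c d s t :: complex
  assumes "a * d = 1"
  shows "trace (mat2 s (t * a) (- t * d) (s - (x * d - c) * t) ** (mat2 x 1 (-1) 0 ** mat2 a 0 c d)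
      ** mat2 (s - t * x * d) (- t * d) (t * (a + x * c)) (s + t * c)) =
    (x * s - (a + d) * t) * ((a + d) * s - x * t) - (x * d - c) * (s\<^sup>2 + t\<^sup>2) + 4 * s * t"
  using assms by simp algebra

lemma trace_commutator_normal_form:
  fixes x a c d s t :: complex
  assumes "a * d = 1"
  defines "X \<equiv> mat2 s (t * a) (- t * d) (s - (x * d - c) * t)"
    and "A \<equiv> mat2 x 1 (-1) 0" and "B \<equiv> mat2 a 0 c d"
  shows "trace (X ** (A ** B)) - trace (X ** (B ** A)) =
    (x * (a + d) * (x * d - c) + 4 - x\<^sup>2 - (a + d)\<^sup>2 - (x * d - c)\<^sup>2) * t"
  using assms unfolding X_def A_def B_def by simp algebra

lemma trace_commutator_w_normal_form:
  fixes x a c d s t :: complex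
  assumes "a * d = 1" "s\<^sup>2 - (x * d - c) * s * t + t\<^sup>2 = 1"
  defines "X \<equiv> mat2 s (t * a) (- t * d) (s - (x * d - c) * t)"
    and "Y \<equiv> mat2 (s - t * x * d) (- t * d) (t * (a + x * c)) (s + t * c)"
    and "A \<equiv> mat2 x 1 (-1) 0" and "B \<equiv> mat2 a 0 c d"
  shows "trace (X ** (A ** B) ** Y ** X ** (A ** B)) - trace (X ** (A ** B) ** Y ** X ** (B ** A)) =
    (x * (a + d) * (x * d - c) + 4 - x\<^sup>2 - (a + d)\<^sup>2 - (x * d - c)\<^sup>2) *
    (((x * s - (a + d) * t) * ((a + d) * s - x * t) - (x * d - c) * (s\<^sup>2 + t\<^sup>2) + 4 * s * t) * t - s)"
  using assms unfolding X_def Y_def A_def B_def by simp algebra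

lemma trace_r_word_commutator_normal_form:
  fixes x a c d y z :: complex and m n :: int
  assumes ad: "a * d = 1" and y: "a + d = y" and z: "x * d - c = z"
  defines "A \<equiv> mat2 x 1 (-1) 0" and "B \<equiv> mat2 a 0 c d"
  shows "trace (eval_word A B (r_word m n) ** (A ** B)) - trace (eval_word A B (r_word m n) ** (B ** A))
    = (let t = (x * cheb_S m z - y * cheb_S (m - 1) z) * (y * cheb_S m z - x * cheb_S (m - 1) z)
               - z * ((cheb_S m z)\<^sup>2 + (cheb_S (m - 1) z)\<^sup>2) + 4 * cheb_S m z * cheb_S (m - 1) z
       in (x * y * z + 4 - x\<^sup>2 - y\<^sup>2 - z\<^sup>2) * (cheb_S n t * cheb_S (m - 1) z - cheb_S (n - 1) t * cheb_S m z))"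
proof -
  define s where "s = cheb_S m z"
  define t where "t = cheb_S (m - 1) z"
  define X where "X = mat2 s (t * a) (- t * d) (s - (x * d - c) * t)"
  define Y where "Y = mat2 (s - t * x * d) (- t * d) (t * (a + x * c)) (s + t * c)"
  define W where "W = X ** (A ** B) ** Y"
  define T where "T = trace W"
  define K where "K = x * y * z + 4 - x\<^sup>2 - y\<^sup>2 - z\<^sup>2"
  have dets: "det A = 1" "det B = 1"
    using ad by (simp_all add: A_def B_def)
  have cassini: "s\<^sup>2 - (x * d - c) * s * t + t\<^sup>2 = 1"
    using cheb_S_cassini[of m z] by (simp add: s_def t_def z)
  have X: "eval_word A B (word_pow [La, Lbi] m) = X"
    and Y: "eval_word A B (word_pow [Lai, Lb] m) = Y"
    using eval_word_pow_normal_form[OF ad z, of m] by (simp_all add: X_def Y_def A_def B_def s_def t_def)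
  have "eval_word A B [La, Lb] = A ** B"
    by (simp add: mat_eq_mat2 A_def B_def)
  with X Y have "eval_word A B (w_word m) = W"
    by (simp add: w_word_def W_def matrix_mul_assoc)
  with X have r_trace: "trace (eval_word A B (r_word m n) ** N)
      = cheb_S (n - 1) T * trace (W ** X ** N) - cheb_S (n - 2) T * trace (X ** N)" for N
    using trace_eval_word_pow_mult[OF dets, of "w_word m" n "X ** N"]
    by (simp add: r_word_def T_def matrix_mul_assoc)
  have T: "T = (x * s - y * t) * (y * s - x * t) - z * (s\<^sup>2 + t\<^sup>2) + 4 * s * t"
    using trace_w_normal_form[OF ad, of s t x c]
    unfolding T_def W_def X_def Y_def A_def B_def y z .
  have "trace (X ** (A ** B)) - trace (X ** (B ** A)) = K * t"
    using trace_commutator_normal_form[OF ad, of s t x c] unfolding K_def X_def A_def B_def y z .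
  moreover have "trace (W ** X ** (A ** B)) - trace (W ** X ** (B ** A)) = K * (T * t - s)"
    using trace_commutator_w_normal_form[OF ad cassini] T
    unfolding K_def W_def X_def Y_def A_def B_def y z by (simp add: matrix_mul_assoc)
  moreover have "cheb_S n T = T * cheb_S (n - 1) T - cheb_S (n - 2) T"
    using cheb_S_rec[of "n - 1" T] by simp
  ultimately show ?thesis
    unfolding r_trace Let_def s_def[symmetric] t_def[symmetric] T[symmetric] K_def[symmetric]
    by algebra
qed

theorem proposition3p10:
  fixes m n :: int and x y z :: complex
  shows "trace_poly (r_word m n @ [La, Lb]) x y z - trace_poly (word_rev (r_word m n) @ [La, Lb]) x y z
    = (let t = (x * cheb_S m z - y * cheb_S (m - 1) z) * (y * cheb_S m z - x * cheb_S (m - 1) z)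
               - z * ((cheb_S m z)\<^sup>2 + (cheb_S (m - 1) z)\<^sup>2) + 4 * cheb_S m z * cheb_S (m - 1) z
       in (x * y * z + 4 - x\<^sup>2 - y\<^sup>2 - z\<^sup>2) * (cheb_S n t * cheb_S (m - 1) z - cheb_S (n - 1) t * cheb_S m z))"
proof -
  obtain a c d where ad: "a * d = 1" and y: "a + d = y" and z: "x * d - c = z"
    by (rule sl2_normal_form)
  have "det (mat2 x 1 (-1) 0) = 1" "det (mat2 a 0 c d) = 1"
    and "trace (mat2 x 1 (-1) 0 ** matrix_inv (mat2 a 0 c d)) = z"
    using sl2_normal_form_traces[OF ad] z by simp_all
  then show ?thesis
    using trace_poly_append_ab_minus_rev[of "mat2 x 1 (-1) 0" "mat2 a 0 c d" "r_word m n"]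
      trace_r_word_commutator_normal_form[OF ad y z, of m n]
    by (simp add: y)
qed

end
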